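(* Let $R$ be a commutative noetherian ring and let $\mathcal S$ be a subcategory of $R$-modules which is closed under submodules, extensions and direct unions. Then $\mathcal S$ satisfies the condition $C_{\mathfrak a}$ for every ideal $\mathfrak a$ of $R$.
   Context: A subcategory $\mathcal S$ satisfies the condition $C_{\mathfrak a}$ if for every $R$-module $M$: whenever $\Gamma_{\mathfrak a}(M)=M$ and $(0:_M\mathfrak a)\in\mathcal S$, then $M\in\mathcal S$. Closed under direct unions means: if a module is the union of a directed family of submodules each in $\mathcal S$, it lies in $\mathcal S$. *)

theory Defs
  imports "HOL-Algebra.Module" "HOL-Algebra.Ideal_Product" "HOL-Algebra.Ring_Divisibility"
begin

text \<open>A "subcategory" of R-modules is modelled as a predicate S on modules whose carrier
  lives in a fixed (arbitrary) type 'c.\<close>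

definition ideal_pow :: "('r, 'x) ring_scheme \<Rightarrow> 'r set \<Rightarrow> nat \<Rightarrow> 'r set" where
  "ideal_pow R a n = ((\<lambda>J. ideal_prod R a J) ^^ n) (carrier R)"

definition submod :: "('r, 'c) module \<Rightarrow> 'c set \<Rightarrow> ('r, 'c) module" where
  "submod M H = M\<lparr>carrier := H\<rparr>"

definition annih :: "('r, 'x) ring_scheme \<Rightarrow> ('r, 'c) module \<Rightarrow> 'r set \<Rightarrow> 'c set" where
  "annih R M a = {m \<in> carrier M. \<forall>r\<in>a. r \<odot>\<^bsub>M\<^esub> m = \<zero>\<^bsub>M\<^esub>}"

definition torsion :: "('r, 'x) ring_scheme \<Rightarrow> 'r set \<Rightarrow> ('r, 'c) module \<Rightarrow> 'c set" where
  "torsion R a M = {m \<in> carrier M. \<exists>n. \<forall>r\<in>ideal_pow R a n. r \<odot>\<^bsub>M\<^esub> m = \<zero>\<^bsub>M\<^esub>}"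

definition linear_map :: "('r, 'x) ring_scheme \<Rightarrow> ('r, 'c) module \<Rightarrow> ('r, 'c) module \<Rightarrow> ('c \<Rightarrow> 'c) \<Rightarrow> bool" where
  "linear_map R N M f \<longleftrightarrow>
     f \<in> carrier N \<rightarrow> carrier M \<and>
     (\<forall>x\<in>carrier N. \<forall>y\<in>carrier N. f (x \<oplus>\<^bsub>N\<^esub> y) = f x \<oplus>\<^bsub>M\<^esub> f y) \<and>
     (\<forall>r\<in>carrier R. \<forall>x\<in>carrier N. f (r \<odot>\<^bsub>N\<^esub> x) = r \<odot>\<^bsub>M\<^esub> f x)"

definition closed_submodules :: "('r, 'x) ring_scheme \<Rightarrow> (('r, 'c) module \<Rightarrow> bool) \<Rightarrow> bool" where
  "closed_submodules R S \<longleftrightarrow>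
     (\<forall>M H. module R M \<and> S M \<and> submodule H R M \<longrightarrow> S (submod M H))"

definition closed_extensions :: "('r, 'x) ring_scheme \<Rightarrow> (('r, 'c) module \<Rightarrow> bool) \<Rightarrow> bool" where
  "closed_extensions R S \<longleftrightarrow>
     (\<forall>N M K f g. module R N \<and> module R M \<and> module R K \<and>
        linear_map R N M f \<and> inj_on f (carrier N) \<and>
        linear_map R M K g \<and> g ` carrier M = carrier K \<and>
        f ` carrier N = {x \<in> carrier M. g x = \<zero>\<^bsub>K\<^esub>} \<and>
        S N \<and> S K \<longrightarrow> S M)"

definition closed_direct_unions :: "('r, 'x) ring_scheme \<Rightarrow> (('r, 'c) module \<Rightarrow> bool) \<Rightarrow> bool" where
  "closed_direct_unions R S \<longleftrightarrow>
     (\<forall>M F. module R M \<and> F \<noteq> {} \<and>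
        (\<forall>H\<in>F. submodule H R M \<and> S (submod M H)) \<and>
        (\<forall>H1\<in>F. \<forall>H2\<in>F. \<exists>H3\<in>F. H1 \<union> H2 \<subseteq> H3) \<and>
        \<Union>F = carrier M \<longrightarrow> S M)"

definition condition_C :: "('r, 'x) ring_scheme \<Rightarrow> 'r set \<Rightarrow> (('r, 'c) module \<Rightarrow> bool) \<Rightarrow> bool" where
  "condition_C R a S \<longleftrightarrow>
     (\<forall>M. module R M \<and> torsion R a M = carrier M \<and> S (submod M (annih R M a)) \<longrightarrow> S M)"

end

theory Submission
  imports Defs
begin

text \<open>Since R is noetherian, a = (x_1, ..., x_k). An a-torsion module M is the increasing union
  of the submodules (0 :_M a^n), so by closure under direct unions it suffices that each of them
  lies in S, which is shown by induction on n. Each x_i maps (0 :_M a^(n+1)) into (0 :_M a^n), so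
  for a submodule V of (0 :_M a^(n+1)) the exact sequence 0 -> (0 :_V x_i) -> V -> x_i V -> 0
  reduces V in S to (0 :_V x_i) in S. Killing the generators one at a time ends in
  (0 :_M (x_1, ..., x_k)) = (0 :_M a), which lies in S by hypothesis.\<close>

definition annihilated_by :: "('r, 'c, 'd) module_scheme \<Rightarrow> 'r set \<Rightarrow> 'c set \<Rightarrow> 'c set" where
  "annihilated_by M B V = {m \<in> V. \<forall>r\<in>B. r \<odot>\<^bsub>M\<^esub> m = \<zero>\<^bsub>M\<^esub>}"

lemma annih_eq_annihilated_by: "annih R M a = annihilated_by M a (carrier M)"
  by (simp add: annih_def annihilated_by_def)

lemma torsion_eq_UN_annihilated_by:
  "torsion R a M = (\<Union>n. annihilated_by M (ideal_pow R a n) (carrier M))"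
  by (auto simp: torsion_def annihilated_by_def)

lemma annihilated_by_antimono: "B \<subseteq> B' \<Longrightarrow> annihilated_by M B' V \<subseteq> annihilated_by M B V"
  by (auto simp: annihilated_by_def)

lemma ideal_pow_0 [simp]: "ideal_pow R a 0 = carrier R"
  by (simp add: ideal_pow_def)

lemma ideal_pow_Suc [simp]: "ideal_pow R a (Suc n) = ideal_prod R a (ideal_pow R a n)"
  by (simp add: ideal_pow_def)

lemma (in ring) ideal_ideal_pow: "ideal a R \<Longrightarrow> ideal (ideal_pow R a n) R"
  by (induction n) (simp_all add: oneideal ideal_prod_is_ideal)

lemma (in ring) ideal_pow_Suc_subset: "ideal a R \<Longrightarrow> ideal_pow R a (Suc n) \<subseteq> ideal_pow R a n"
  using ideal_prod_inter[OF _ ideal_ideal_pow] by auto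

lemma (in ring) mono_annihilated_by_ideal_pow:
  assumes "ideal a R"
  shows "mono (\<lambda>n. annihilated_by M (ideal_pow R a n) V)"
  unfolding mono_iff_le_Suc
  by (simp add: annihilated_by_antimono ideal_pow_Suc_subset[OF assms] del: ideal_pow_Suc)

lemma (in module) smult_commute:
  "\<lbrakk>r \<in> carrier R; x \<in> carrier R; m \<in> carrier M\<rbrakk> \<Longrightarrow> r \<odot>\<^bsub>M\<^esub> (x \<odot>\<^bsub>M\<^esub> m) = x \<odot>\<^bsub>M\<^esub> (r \<odot>\<^bsub>M\<^esub> m)"
  by (metis smult_assoc1 m_comm)

lemma submodule_zero_closed: "submodule V R M \<Longrightarrow> \<zero>\<^bsub>M\<^esub> \<in> V"
  using submodule.axioms(1) subgroup.one_closed by fastforce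

lemma (in module) submodule_annihilated_by:
  assumes V: "submodule V R M" and B: "B \<subseteq> carrier R"
  shows "submodule (annihilated_by M B V) R M"
proof -
  have VM: "V \<subseteq> carrier M" using submoduleE(1)[OF V] .
  show ?thesis
  proof (rule submoduleI)
    show "\<zero>\<^bsub>M\<^esub> \<in> annihilated_by M B V"
      using B submodule_zero_closed[OF V] by (auto simp: annihilated_by_def)
  qed (use VM B submoduleE[OF V] in
        \<open>auto simp: annihilated_by_def subset_iff smult_r_minus smult_r_distr smult_commute\<close>)
qed

lemma (in module) submodule_smult_image:
  assumes V: "submodule V R M" and x: "x \<in> carrier R"
  shows "submodule ((\<lambda>m. x \<odot>\<^bsub>M\<^esub> m) ` V) R M"
proof -
  have VM: "V \<subseteq> carrier M" using submoduleE(1)[OF V] .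
  show ?thesis
  proof (rule submoduleI)
    show "\<zero>\<^bsub>M\<^esub> \<in> (\<lambda>m. x \<odot>\<^bsub>M\<^esub> m) ` V"
      using x submodule_zero_closed[OF V] by (metis image_eqI smult_r_null)
  next
    fix a assume "a \<in> (\<lambda>m. x \<odot>\<^bsub>M\<^esub> m) ` V"
    then obtain v where "v \<in> V" "a = x \<odot>\<^bsub>M\<^esub> v" by blast
    then show "\<ominus>\<^bsub>M\<^esub> a \<in> (\<lambda>m. x \<odot>\<^bsub>M\<^esub> m) ` V"
      using VM x submoduleE(3)[OF V] by (metis image_eqI smult_r_minus subsetD)
  next
    fix a b assume "a \<in> (\<lambda>m. x \<odot>\<^bsub>M\<^esub> m) ` V" "b \<in> (\<lambda>m. x \<odot>\<^bsub>M\<^esub> m) ` V"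
    then obtain v w where "v \<in> V" "a = x \<odot>\<^bsub>M\<^esub> v" "w \<in> V" "b = x \<odot>\<^bsub>M\<^esub> w" by blast
    then show "a \<oplus>\<^bsub>M\<^esub> b \<in> (\<lambda>m. x \<odot>\<^bsub>M\<^esub> m) ` V"
      using VM x submoduleE(5)[OF V] by (auto simp: smult_r_distr[symmetric] subset_iff)
  next
    fix r a assume r: "r \<in> carrier R" and "a \<in> (\<lambda>m. x \<odot>\<^bsub>M\<^esub> m) ` V"
    then obtain v where "v \<in> V" "a = x \<odot>\<^bsub>M\<^esub> v" by blast
    then show "r \<odot>\<^bsub>M\<^esub> a \<in> (\<lambda>m. x \<odot>\<^bsub>M\<^esub> m) ` V"
      using VM x r submoduleE(4)[OF V] by (auto simp: smult_commute[of r x] subset_iff)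
  qed (use VM x in auto)
qed

lemma (in module) ideal_annihilator:
  assumes m: "m \<in> carrier M"
  shows "ideal {r \<in> carrier R. r \<odot>\<^bsub>M\<^esub> m = \<zero>\<^bsub>M\<^esub>} R"
proof (rule idealI)
  show "subgroup {r \<in> carrier R. r \<odot>\<^bsub>M\<^esub> m = \<zero>\<^bsub>M\<^esub>} (add_monoid R)"
    using m by (intro R.add.subgroupI) (auto simp: smult_l_distr smult_l_minus)
next
  fix a x assume "a \<in> {r \<in> carrier R. r \<odot>\<^bsub>M\<^esub> m = \<zero>\<^bsub>M\<^esub>}" "x \<in> carrier R"
  then show "x \<otimes> a \<in> {r \<in> carrier R. r \<odot>\<^bsub>M\<^esub> m = \<zero>\<^bsub>M\<^esub>}"
    and "a \<otimes> x \<in> {r \<in> carrier R. r \<odot>\<^bsub>M\<^esub> m = \<zero>\<^bsub>M\<^esub>}"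
    using m by (auto simp: smult_assoc1 m_comm smult_commute[of a x])
qed (rule ring_axioms)

lemma (in module) annihilated_by_genideal:
  assumes "A \<subseteq> carrier R" "V \<subseteq> carrier M"
  shows "annihilated_by M (Idl\<^bsub>R\<^esub> A) V = annihilated_by M A V"
proof
  show "annihilated_by M (Idl\<^bsub>R\<^esub> A) V \<subseteq> annihilated_by M A V"
    using annihilated_by_antimono genideal_self[OF assms(1)] .
  show "annihilated_by M A V \<subseteq> annihilated_by M (Idl\<^bsub>R\<^esub> A) V"
  proof
    fix m assume m: "m \<in> annihilated_by M A V"
    then have "Idl\<^bsub>R\<^esub> A \<subseteq> {r \<in> carrier R. r \<odot>\<^bsub>M\<^esub> m = \<zero>\<^bsub>M\<^esub>}"
      using assms by (intro genideal_minimal ideal_annihilator) (auto simp: annihilated_by_def)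
    with m show "m \<in> annihilated_by M (Idl\<^bsub>R\<^esub> A) V"
      by (auto simp: annihilated_by_def)
  qed
qed

lemma (in module) smult_annihilated_by_ideal_prod:
  assumes "x \<in> I" "I \<subseteq> carrier R" "J \<subseteq> carrier R" "m \<in> annihilated_by M (I \<cdot>\<^bsub>R\<^esub> J) (carrier M)"
  shows "x \<odot>\<^bsub>M\<^esub> m \<in> annihilated_by M J (carrier M)"
proof -
  have "r \<odot>\<^bsub>M\<^esub> (x \<odot>\<^bsub>M\<^esub> m) = (x \<otimes>\<^bsub>R\<^esub> r) \<odot>\<^bsub>M\<^esub> m" if "r \<in> J" for r
    using assms that by (auto simp: annihilated_by_def smult_commute[of r x] smult_assoc1 subset_iff)
  also have "(x \<otimes>\<^bsub>R\<^esub> r) \<odot>\<^bsub>M\<^esub> m = \<zero>\<^bsub>M\<^esub>" if "r \<in> J" for r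
    using assms ideal_prod.prod[OF assms(1) that] by (auto simp: annihilated_by_def)
  finally show ?thesis
    using assms by (auto simp: annihilated_by_def subset_iff)
qed

lemma module_submod:
  "\<lbrakk>module R M; submodule H R M\<rbrakk> \<Longrightarrow> module R (submod M H)"
  unfolding submod_def by (rule submodule.submodule_is_module)

lemma closed_submodules_subset:
  fixes M :: "('r, 'c) module"
  assumes "module R M" "closed_submodules R S"
    and "submodule H R M" "submodule K R M" "H \<subseteq> K" "S (submod M K)"
  shows "S (submod M H)"
proof -
  interpret module R M by fact
  have "module R ((submod M K)\<lparr>carrier := H\<rparr>)"
    using module_submod[OF assms(1,3)] by (simp add: submod_def)
  then have "submodule H R (submod M K)"
    using module.module_incl_imp_submodule[OF module_submod[OF assms(1,4)]] assms(5)
    by (simp add: submod_def)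
  then have "S (submod (submod M K) H)"
    using assms(2,6) module_submod[OF assms(1,4)] unfolding closed_submodules_def by blast
  then show ?thesis by (simp add: submod_def)
qed

lemma closed_extensions_smult:
  fixes M :: "('r, 'c) module"
  assumes "module R M" "closed_extensions R S"
    and V: "submodule V R M" and x: "x \<in> carrier R"
    and "S (submod M (annihilated_by M {x} V))" "S (submod M ((\<lambda>m. x \<odot>\<^bsub>M\<^esub> m) ` V))"
  shows "S (submod M V)"
proof -
  interpret module R M by fact
  let ?K = "annihilated_by M {x} V" and ?xV = "(\<lambda>m. x \<odot>\<^bsub>M\<^esub> m) ` V"
  have VM: "V \<subseteq> carrier M" using submoduleE(1)[OF V] .
  have K: "submodule ?K R M" using submodule_annihilated_by[OF V] x by simp
  have xV: "submodule ?xV R M" using submodule_smult_image[OF V x] .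
  have incl: "linear_map R (submod M ?K) (submod M V) id"
    by (auto simp: linear_map_def submod_def annihilated_by_def)
  have mult: "linear_map R (submod M V) (submod M ?xV) (\<lambda>m. x \<odot>\<^bsub>M\<^esub> m)"
    using VM x by (auto simp: linear_map_def submod_def smult_r_distr smult_commute subset_iff)
  show ?thesis
    using assms(2) module_submod[OF assms(1)] K V xV incl mult assms(5,6)
    unfolding closed_extensions_def
    by (elim allE[of _ "submod M ?K"] allE[of _ "submod M V"] allE[of _ "submod M ?xV"]
        allE[of _ id] allE[of _ "\<lambda>m. x \<odot>\<^bsub>M\<^esub> m"])
      (auto simp: submod_def annihilated_by_def)
qed

lemma closed_extensions_annihilated_by_finite:
  fixes M :: "('r, 'c) module"
  assumes "module R M" "closed_submodules R S" "closed_extensions R S"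
    and "finite A" "A \<subseteq> carrier R"
    and "submodule W R M" "S (submod M W)"
    and "submodule V R M" "\<forall>x\<in>A. (\<lambda>m. x \<odot>\<^bsub>M\<^esub> m) ` V \<subseteq> W"
    and "S (submod M (annihilated_by M A V))"
  shows "S (submod M V)"
  using assms(4,5,8-)
proof (induction A arbitrary: V rule: finite_induct)
  case empty
  then show ?case by (simp add: annihilated_by_def)
next
  case (insert y A)
  interpret module R M by fact
  let ?K = "annihilated_by M {y} V"
  have y: "y \<in> carrier R" using insert.prems(1) by simp
  have K: "submodule ?K R M" using submodule_annihilated_by[OF insert.prems(2)] y by simp
  have "annihilated_by M A ?K = annihilated_by M (insert y A) V"
    by (auto simp: annihilated_by_def)
  moreover have "\<forall>x\<in>A. (\<lambda>m. x \<odot>\<^bsub>M\<^esub> m) ` ?K \<subseteq> W"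
    using insert.prems(3) by (auto simp: annihilated_by_def)
  ultimately have "S (submod M ?K)"
    using insert.IH[OF _ K] insert.prems by simp
  moreover have "S (submod M ((\<lambda>m. y \<odot>\<^bsub>M\<^esub> m) ` V))"
    using closed_submodules_subset[OF assms(1,2) submodule_smult_image[OF insert.prems(2) y]
        assms(6)] insert.prems(3) assms(7) by simp
  ultimately show ?case
    using closed_extensions_smult[OF assms(1,3) insert.prems(2) y] by simp
qed

lemma closed_extensions_annihilated_by_ideal_pow:
  fixes M :: "('r, 'c) module"
  assumes "module R M" "closed_submodules R S" "closed_extensions R S"
    and A: "finite A" "A \<subseteq> carrier R"
    and S_ann: "S (submod M (annihilated_by M (Idl\<^bsub>R\<^esub> A) (carrier M)))"
  shows "S (submod M (annihilated_by M (ideal_pow R (Idl\<^bsub>R\<^esub> A) n) (carrier M)))"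
proof -
  interpret module R M by fact
  let ?a = "Idl\<^bsub>R\<^esub> A"
  let ?T = "\<lambda>k. annihilated_by M (ideal_pow R ?a k) (carrier M)"
  have a: "ideal ?a R" using genideal_ideal[OF A(2)] .
  have a_carrier: "?a \<subseteq> carrier R"
    using ideal.Icarr[OF a] by blast
  have pow_carrier: "ideal_pow R ?a k \<subseteq> carrier R" for k
    using ideal.Icarr[OF ideal_ideal_pow[OF a]] by blast
  have T: "submodule (?T k) R M" for k
    using submodule_annihilated_by[OF carrier_is_submodule pow_carrier] .
  have ann: "submodule (annihilated_by M ?a (carrier M)) R M"
    using submodule_annihilated_by[OF carrier_is_submodule a_carrier] .
  show ?thesis
  proof (induction n)
    case 0
    have "?T 0 \<subseteq> annihilated_by M ?a (carrier M)"
      by (rule annihilated_by_antimono) (simp add: a_carrier)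
    then show ?case using closed_submodules_subset[OF assms(1,2) T ann] S_ann by blast
  next
    case (Suc n)
    have "annihilated_by M A (?T (Suc n)) \<subseteq> annihilated_by M ?a (carrier M)"
      using annihilated_by_genideal[OF A(2)] by (auto simp: annihilated_by_def)
    moreover have "submodule (annihilated_by M A (?T (Suc n))) R M"
      using submodule_annihilated_by[OF T A(2)] .
    ultimately have "S (submod M (annihilated_by M A (?T (Suc n))))"
      using closed_submodules_subset[OF assms(1,2) _ ann _ S_ann] by blast
    moreover have "\<forall>x\<in>A. (\<lambda>m. x \<odot>\<^bsub>M\<^esub> m) ` ?T (Suc n) \<subseteq> ?T n"
      using smult_annihilated_by_ideal_prod[OF _ a_carrier pow_carrier] genideal_self[OF A(2)]
      by auto
    ultimately show ?case
      using closed_extensions_annihilated_by_finite[OF assms(1-3) A T Suc.IH T] by blast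
  qed
qed

lemma closed_direct_unions_mono:
  fixes M :: "('r, 'c) module" and T :: "nat \<Rightarrow> 'c set"
  assumes "module R M" "closed_direct_unions R S"
    and "mono T" "\<And>n. submodule (T n) R M" "\<And>n. S (submod M (T n))"
    and "(\<Union>n. T n) = carrier M"
  shows "S M"
proof -
  have "T i \<union> T j \<subseteq> T (max i j)" for i j
    using monoD[OF assms(3), of i "max i j"] monoD[OF assms(3), of j "max i j"] by auto
  then have "\<forall>H1\<in>range T. \<forall>H2\<in>range T. \<exists>H3\<in>range T. H1 \<union> H2 \<subseteq> H3"
    by blast
  moreover have "\<forall>H\<in>range T. submodule H R M \<and> S (submod M H)"
    using assms(4,5) by blast
  ultimately show ?thesis
    using assms(2) assms(1,6) unfolding closed_direct_unions_def
    by (elim allE[of _ M] allE[of _ "range T"]) simp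
qed

theorem proposition3p1:
  fixes R :: "'r ring" and S :: "('r, 'c) module \<Rightarrow> bool"
  assumes "cring R" and "noetherian_ring R"
    and "closed_submodules R S"
    and "closed_extensions R S"
    and "closed_direct_unions R S"
  shows "\<forall>a. ideal a R \<longrightarrow> condition_C R a S"
proof (intro allI impI)
  fix a assume a: "ideal a R"
  then obtain A where A: "finite A" "A \<subseteq> carrier R" "a = Idl\<^bsub>R\<^esub> A"
    using noetherian_ring.finetely_gen[OF assms(2)] by blast
  show "condition_C R a S"
    unfolding condition_C_def
  proof (intro allI impI, elim conjE)
    fix M :: "('r, 'c) module"
    assume M: "module R M" and torsion: "torsion R a M = carrier M"
      and S_ann: "S (submod M (annih R M a))"
    interpret module R M by fact
    let ?T = "\<lambda>n. annihilated_by M (ideal_pow R a n) (carrier M)"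
    have "S (submod M (?T n))" for n
      using closed_extensions_annihilated_by_ideal_pow[OF M assms(3,4) A(1,2)] S_ann
      by (simp add: A(3) annih_eq_annihilated_by)
    moreover have "submodule (?T n) R M" for n
      using submodule_annihilated_by[OF carrier_is_submodule] ideal.Icarr[OF ideal_ideal_pow[OF a]]
      by blast
    moreover have "mono ?T"
      using mono_annihilated_by_ideal_pow[OF a] .
    ultimately show "S M"
      using closed_direct_unions_mono[OF M assms(5)] torsion
      by (simp add: torsion_eq_UN_annihilated_by)
  qed
qed

end
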